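(* Every geodesic $s\mapsto\mathbf t(s)$ of the quasi-Euclidean space $(\mathbb{R}^N\setminus\{0\},\,n_{pq}(g;t))$ lies in a two-dimensional linear subspace of $\mathbb{R}^N$ (through the origin); that is, the geodesics are plane curves.
   Context: Let $N\ge2$; $(r_{pq})$ is a symmetric positive-definite $N\times N$ matrix with $r_{NN}=1$, $r_{Na}=0$ ($a<N$), $S(t)=\sqrt{r_{pq}t^pt^q}$, $L_p=r_{pq}t^q/S(t)$. Fix $g\in(-2,2)$, $h=\sqrt{1-g^2/4}$, $G=g/h$. The quasi-Euclidean metric tensor is $n_{pq}(g;t)=\frac1{h^2}r_{pq}-\frac14G^2L_pL_q$, and geodesics are solutions of the Levi-Civita geodesic equation $\frac{d^2t^p}{ds^2}+N_q{}^p{}_r\frac{dt^q}{ds}\frac{dt^r}{ds}=0$, where $N_q{}^p{}_r$ are the Christoffel symbols of $n_{pq}$. *)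

theory Defs
  imports "HOL-Analysis.Analysis"
begin

definition hpar :: "real \<Rightarrow> real" where
  "hpar g = sqrt (1 - g\<^sup>2 / 4)"

definition Gpar :: "real \<Rightarrow> real" where
  "Gpar g = g / hpar g"

definition Snorm :: "real^'n^'n \<Rightarrow> real^'n \<Rightarrow> real" where
  "Snorm r t = sqrt (\<Sum>p\<in>UNIV. \<Sum>q\<in>UNIV. r$p$q * t$p * t$q)"

definition Lcov :: "real^'n^'n \<Rightarrow> real^'n \<Rightarrow> 'n \<Rightarrow> real" where
  "Lcov r t p = (\<Sum>q\<in>UNIV. r$p$q * t$q) / Snorm r t"

definition qe_metric :: "real \<Rightarrow> real^'n^'n \<Rightarrow> real^'n \<Rightarrow> 'n \<Rightarrow> 'n \<Rightarrow> real" where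
  "qe_metric g r t p q =
     r$p$q / (hpar g)\<^sup>2 - (1/4) * (Gpar g)\<^sup>2 * Lcov r t p * Lcov r t q"

definition qe_metric_matrix :: "real \<Rightarrow> real^'n^'n \<Rightarrow> real^'n \<Rightarrow> real^'n^'n" where
  "qe_metric_matrix g r t = (\<chi> p q. qe_metric g r t p q)"

definition qe_inv_metric :: "real \<Rightarrow> real^'n^'n \<Rightarrow> real^'n \<Rightarrow> 'n \<Rightarrow> 'n \<Rightarrow> real" where
  "qe_inv_metric g r t p q = matrix_inv (qe_metric_matrix g r t) $ p $ q"

definition partial :: "(real^'n \<Rightarrow> real) \<Rightarrow> 'n \<Rightarrow> real^'n \<Rightarrow> real" where
  "partial f k t = deriv (\<lambda>x. f (t + x *\<^sub>R axis k 1)) 0"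

definition christoffel :: "real \<Rightarrow> real^'n^'n \<Rightarrow> real^'n \<Rightarrow> 'n \<Rightarrow> 'n \<Rightarrow> 'n \<Rightarrow> real" where
  "christoffel g r t q p s =
     (1/2) * (\<Sum>m\<in>UNIV. qe_inv_metric g r t p m *
        (partial (\<lambda>x. qe_metric g r x m s) q t
         + partial (\<lambda>x. qe_metric g r x m q) s t
         - partial (\<lambda>x. qe_metric g r x q s) m t))"

definition qe_geodesic ::
  "real \<Rightarrow> real^'n^'n \<Rightarrow> (real \<Rightarrow> real^'n) \<Rightarrow> real \<Rightarrow> real \<Rightarrow> bool" where
  "qe_geodesic g r c a b \<longleftrightarrow>
     (\<exists>c' c''. \<forall>s\<in>{a<..<b}.
        c s \<noteq> 0 \<and>
        (c has_vector_derivative c' s) (at s) \<and>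
        (c' has_vector_derivative c'' s) (at s) \<and>
        (\<forall>p. c'' s $ p + (\<Sum>q\<in>UNIV. \<Sum>m\<in>UNIV.
                 christoffel g r (c s) q p m * c' s $ q * c' s $ m) = 0))"

end

theory Submission
  imports Defs
begin

text \<open>Because \<open>n t = r t\<close>, the inverse metric sends \<open>L\<close> to \<open>t / S\<close>; together with
  \<open>\<partial>\<^sub>k L\<^sub>m = (r\<^sub>m\<^sub>k - L\<^sub>m L\<^sub>k) / S\<close> this makes every Christoffel symbol radial,
  \<open>N\<^sub>q\<^sup>p\<^sub>m = - G\<^sup>2 / 4 \<cdot> (r\<^sub>q\<^sub>m - L\<^sub>q L\<^sub>m) / S\<^sup>2 \<cdot> t\<^sup>p\<close>.
  A geodesic therefore obeys a central-force law \<open>t'' = \<mu>(s) t\<close>, so its "angular momentum"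
  \<open>t \<and> t'\<close> is constant. For \<open>z\<close> orthogonal to a plane containing \<open>t(s\<^sub>0)\<close> and \<open>t'(s\<^sub>0)\<close>
  this forces \<open>z \<bullet> t / |t|\<close> to be constant, hence zero, and the curve stays in that plane.\<close>

section \<open>Curves with radial acceleration are planar\<close>

lemma subspace_of_dim_superset:
  fixes S :: "'a::euclidean_space set"
  assumes "dim S \<le> n" and "n \<le> DIM('a)"
  obtains T where "subspace T" "S \<subseteq> T" "dim T = n"
proof -
  obtain B0 where B0: "B0 \<subseteq> S" "independent B0" "S \<subseteq> span B0" "card B0 = dim S"
    by (rule basis_exists)
  obtain B where B: "B0 \<subseteq> B" "independent B" "UNIV \<subseteq> span B"
    using maximal_independent_subset_extend[of B0 UNIV] B0(2) by auto
  have "finite B"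
    using B(2) by (rule finiteI_independent)
  have "span B = UNIV"
    using B(3) by blast
  then have "card B = DIM('a)"
    using dim_eq_card_independent[OF B(2)] dim_span[of B] by simp
  then have "n - dim S \<le> card (B - B0)"
    using B(1) B0(4) \<open>finite B\<close> assms(2) card_Diff_subset[of B0 B] finite_subset[of B0 B] by simp
  then obtain C where C: "C \<subseteq> B - B0" "card C = n - dim S"
    by (rule obtain_subset_with_card_n)
  have fin: "finite B0" "finite C"
    using \<open>finite B\<close> B(1) C(1) by (auto intro: finite_subset)
  have "independent (B0 \<union> C)"
    using B(1,2) C(1) independent_mono[of B "B0 \<union> C"] by blast
  moreover have "card (B0 \<union> C) = n"
    using fin C B0(4) assms(1) by (subst card_Un_disjoint) auto
  ultimately have "dim (span (B0 \<union> C)) = n"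
    by (simp add: dim_eq_card_independent)
  moreover have "S \<subseteq> span (B0 \<union> C)"
    using B0(3) span_mono[of B0 "B0 \<union> C"] by blast
  ultimately show thesis
    using that subspace_span by blast
qed

lemma plane_through_two_vectors:
  fixes u w :: "'a::euclidean_space"
  assumes "DIM('a) \<ge> 2"
  obtains V where "subspace V" "dim V = 2" "u \<in> V" "w \<in> V"
proof -
  have "dim {u, w} \<le> card {u, w}"
    by (rule dim_le_card) (auto intro: span_base)
  also have "\<dots> \<le> 2"
    by (simp add: card_insert_if)
  finally have "dim {u, w} \<le> 2" .
  then show thesis
    using subspace_of_dim_superset[OF _ assms] that by (metis insert_subset)
qed

lemma mem_subspace_if_orthogonal_complement:
  fixes x :: "'a::euclidean_space"
  assumes "subspace V" and "\<And>z. (\<forall>w\<in>V. z \<bullet> w = 0) \<Longrightarrow> z \<bullet> x = 0"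
  shows "x \<in> V"
proof -
  obtain y z where y: "y \<in> V" and z: "\<And>w. w \<in> V \<Longrightarrow> z \<bullet> w = 0" and "x = y + z"
    using orthogonal_subspace_decomp_exists[of V x] assms(1)
    by (metis orthogonal_def span_eq_iff)
  then have "z \<bullet> z = z \<bullet> x - z \<bullet> y"
    by (simp add: inner_add_right)
  also have "\<dots> = 0"
    using assms(2) z y by simp
  finally show ?thesis
    using y \<open>x = y + z\<close> by simp
qed

lemma has_real_derivative_inner_right:
  fixes x :: "real \<Rightarrow> 'a::real_inner"
  assumes "(x has_vector_derivative v) (at s)"
  shows "((\<lambda>s. z \<bullet> x s) has_real_derivative (z \<bullet> v)) (at s)"
  using bounded_linear.has_vector_derivative[OF bounded_linear_inner_right assms]
  by (simp add: has_real_derivative_iff_has_vector_derivative)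

lemma has_real_derivative_inner_self:
  fixes x :: "real \<Rightarrow> 'a::real_inner"
  assumes "(x has_vector_derivative v) (at s)"
  shows "((\<lambda>s. x s \<bullet> x s) has_real_derivative (2 * (x s \<bullet> v))) (at s)"
  using bounded_bilinear.has_vector_derivative[OF bounded_bilinear_inner assms assms]
  by (simp add: has_real_derivative_iff_has_vector_derivative inner_commute)

lemma radial_acceleration_wedge_constant:
  fixes x v :: "real \<Rightarrow> 'a::real_inner"
  assumes "convex I"
    and x': "\<And>s. s \<in> I \<Longrightarrow> (x has_vector_derivative v s) (at s)"
    and v': "\<And>s. s \<in> I \<Longrightarrow> (v has_vector_derivative \<mu> s *\<^sub>R x s) (at s)"
    and "s \<in> I" "s0 \<in> I"
  shows "(\<alpha> \<bullet> x s) * (\<beta> \<bullet> v s) - (\<beta> \<bullet> x s) * (\<alpha> \<bullet> v s)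
       = (\<alpha> \<bullet> x s0) * (\<beta> \<bullet> v s0) - (\<beta> \<bullet> x s0) * (\<alpha> \<bullet> v s0)"
proof -
  have "\<exists>C. \<forall>s\<in>I. (\<alpha> \<bullet> x s) * (\<beta> \<bullet> v s) - (\<beta> \<bullet> x s) * (\<alpha> \<bullet> v s) = C"
  proof (rule has_field_derivative_zero_constant[OF \<open>convex I\<close>])
    fix t assume "t \<in> I"
    note dx = has_real_derivative_inner_right[OF x'[OF \<open>t \<in> I\<close>]]
    note dv = has_real_derivative_inner_right[OF v'[OF \<open>t \<in> I\<close>]]
    have "((\<lambda>s. (\<alpha> \<bullet> x s) * (\<beta> \<bullet> v s) - (\<beta> \<bullet> x s) * (\<alpha> \<bullet> v s)) has_real_derivative
        (\<alpha> \<bullet> v t) * (\<beta> \<bullet> v t) + (\<beta> \<bullet> (\<mu> t *\<^sub>R x t)) * (\<alpha> \<bullet> x t)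
         - ((\<beta> \<bullet> v t) * (\<alpha> \<bullet> v t) + (\<alpha> \<bullet> (\<mu> t *\<^sub>R x t)) * (\<beta> \<bullet> x t))) (at t)"
      by (intro DERIV_diff DERIV_mult dx dv)
    then show "((\<lambda>s. (\<alpha> \<bullet> x s) * (\<beta> \<bullet> v s) - (\<beta> \<bullet> x s) * (\<alpha> \<bullet> v s)) has_field_derivative 0)
        (at t within I)"
      by (simp add: has_field_derivative_at_within algebra_simps)
  qed
  then show ?thesis
    using \<open>s \<in> I\<close> \<open>s0 \<in> I\<close> by metis
qed

text \<open>Hypothesis \<open>rot\<close> says exactly that \<open>z \<bullet> x / |x|\<close> has derivative zero.\<close>

lemma direction_component_constant:
  fixes x v :: "real \<Rightarrow> 'a::real_inner"
  assumes "convex I"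
    and nz: "\<And>s. s \<in> I \<Longrightarrow> x s \<noteq> 0"
    and x': "\<And>s. s \<in> I \<Longrightarrow> (x has_vector_derivative v s) (at s)"
    and rot: "\<And>s. s \<in> I \<Longrightarrow> (z \<bullet> x s) * (x s \<bullet> v s) = (x s \<bullet> x s) * (z \<bullet> v s)"
    and "s \<in> I" "s0 \<in> I"
  shows "(z \<bullet> x s)^2 / (x s \<bullet> x s) = (z \<bullet> x s0)^2 / (x s0 \<bullet> x s0)"
proof -
  have "\<exists>C. \<forall>s\<in>I. (z \<bullet> x s)^2 / (x s \<bullet> x s) = C"
  proof (rule has_field_derivative_zero_constant[OF \<open>convex I\<close>])
    fix t assume "t \<in> I"
    note dz = has_real_derivative_inner_right[OF x'[OF \<open>t \<in> I\<close>], of z]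
    have numerator: "(z \<bullet> v t * (z \<bullet> x t) + z \<bullet> v t * (z \<bullet> x t)) * (x t \<bullet> x t)
          - (z \<bullet> x t) * (z \<bullet> x t) * (2 * (x t \<bullet> v t)) = 0"
      using rot[OF \<open>t \<in> I\<close>] by (simp add: algebra_simps)
    have "((\<lambda>s. (z \<bullet> x s) * (z \<bullet> x s) / (x s \<bullet> x s)) has_real_derivative
        ((z \<bullet> v t * (z \<bullet> x t) + z \<bullet> v t * (z \<bullet> x t)) * (x t \<bullet> x t)
          - (z \<bullet> x t) * (z \<bullet> x t) * (2 * (x t \<bullet> v t))) / ((x t \<bullet> x t) * (x t \<bullet> x t))) (at t)"
      using nz[OF \<open>t \<in> I\<close>]
      by (intro DERIV_divide DERIV_mult dz has_real_derivative_inner_self x' \<open>t \<in> I\<close>) simp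
    then have "((\<lambda>s. (z \<bullet> x s) * (z \<bullet> x s) / (x s \<bullet> x s)) has_real_derivative 0) (at t)"
      unfolding numerator by simp
    then show "((\<lambda>s. (z \<bullet> x s)^2 / (x s \<bullet> x s)) has_field_derivative 0) (at t within I)"
      by (simp add: has_field_derivative_at_within power2_eq_square)
  qed
  then show ?thesis
    using \<open>s \<in> I\<close> \<open>s0 \<in> I\<close> by metis
qed

lemma radial_acceleration_stays_in_subspace:
  fixes x v :: "real \<Rightarrow> 'a::euclidean_space"
  assumes "convex I" and "subspace V"
    and nz: "\<And>s. s \<in> I \<Longrightarrow> x s \<noteq> 0"
    and x': "\<And>s. s \<in> I \<Longrightarrow> (x has_vector_derivative v s) (at s)"
    and v': "\<And>s. s \<in> I \<Longrightarrow> (v has_vector_derivative \<mu> s *\<^sub>R x s) (at s)"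
    and "s0 \<in> I" "x s0 \<in> V" "v s0 \<in> V"
    and "s \<in> I"
  shows "x s \<in> V"
proof (rule mem_subspace_if_orthogonal_complement[OF \<open>subspace V\<close>])
  fix z assume z: "\<forall>w\<in>V. z \<bullet> w = 0"
  \<comment> \<open>the wedge component along \<open>z \<and> x t\<close> vanishes at \<open>s0\<close>, hence everywhere\<close>
  have rot: "(z \<bullet> x t) * (x t \<bullet> v t) = (x t \<bullet> x t) * (z \<bullet> v t)" if "t \<in> I" for t
    using radial_acceleration_wedge_constant[OF \<open>convex I\<close> x' v' that \<open>s0 \<in> I\<close>, of z "x t"]
      z \<open>x s0 \<in> V\<close> \<open>v s0 \<in> V\<close> by simp
  have "(z \<bullet> x s)^2 / (x s \<bullet> x s) = (z \<bullet> x s0)^2 / (x s0 \<bullet> x s0)"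
    by (rule direction_component_constant[OF \<open>convex I\<close> nz x' rot \<open>s \<in> I\<close> \<open>s0 \<in> I\<close>])
  then show "z \<bullet> x s = 0"
    using z \<open>x s0 \<in> V\<close> nz[OF \<open>s \<in> I\<close>] by simp
qed

section \<open>Derivatives of the quasi-Euclidean metric\<close>

abbreviation quad_form :: "real^'n^'n \<Rightarrow> real^'n \<Rightarrow> real" where
  "quad_form r t \<equiv> \<Sum>p\<in>UNIV. \<Sum>q\<in>UNIV. r$p$q * t$p * t$q"

lemma quad_form_altdef: "quad_form r t = (\<Sum>p\<in>UNIV. t$p * (r *v t)$p)"
  by (simp add: matrix_vector_mult_def sum_distrib_left algebra_simps)

lemma Snorm_pos: "quad_form r t > 0 \<Longrightarrow> Snorm r t > 0"
  by (simp add: Snorm_def)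

lemma Lcov_altdef: "Lcov r t p = (r *v t)$p / Snorm r t"
  by (simp add: Lcov_def matrix_vector_mult_def)

lemma sum_Lcov_mult_self:
  assumes "quad_form r t > 0"
  shows "(\<Sum>q\<in>UNIV. Lcov r t q * t$q) = Snorm r t"
proof -
  have "(\<Sum>q\<in>UNIV. Lcov r t q * t$q) = (\<Sum>q\<in>UNIV. t$q * (r *v t)$q) / Snorm r t"
    by (simp add: Lcov_altdef sum_divide_distrib mult.commute)
  also have "\<dots> = quad_form r t / Snorm r t"
    by (simp add: quad_form_altdef)
  also have "\<dots> = Snorm r t"
    using assms by (simp add: Snorm_def real_div_sqrt)
  finally show ?thesis .
qed

lemma axis_nth_if: "axis k (1::real) $ p = (if p = k then 1 else 0)"
  by (simp add: axis_def)

lemma matrix_vector_mult_axis: "(r::real^'n^'n) *v axis k 1 = column k r"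
  by (simp add: vec_eq_iff matrix_vector_mult_def axis_def column_def if_distrib cong: if_cong)

lemma matrix_vector_mult_line:
  "((r::real^'n^'n) *v (t + y *\<^sub>R axis k 1))$m = (r *v t)$m + y * r$m$k"
  by (simp add: matrix_vector_right_distrib matrix_vector_mult_scaleR
      matrix_vector_mult_axis column_def)

lemma quad_form_line:
  fixes r :: "real^'n^'n"
  assumes sym: "\<forall>p q. r$p$q = r$q$p"
  shows "quad_form r (t + y *\<^sub>R axis k 1) = quad_form r t + y * (2 * (r *v t)$k) + y^2 * r$k$k"
proof -
  let ?e = "axis k (1::real)"
  have "quad_form r (t + y *\<^sub>R ?e) = (\<Sum>p\<in>UNIV. (t + y *\<^sub>R ?e)$p * (r *v (t + y *\<^sub>R ?e))$p)"
    by (rule quad_form_altdef)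
  also have "\<dots> = (\<Sum>p\<in>UNIV. t$p * (r *v t)$p + y * (t$p * r$p$k)
      + (if p = k then y * (r *v t)$p + y^2 * r$p$k else 0))"
    by (intro sum.cong refl) (unfold matrix_vector_mult_line, simp add: axis_nth_if algebra_simps power2_eq_square)
  also have "\<dots> = quad_form r t + y * (\<Sum>p\<in>UNIV. t$p * r$p$k) + (y * (r *v t)$k + y^2 * r$k$k)"
    by (simp add: sum.distrib quad_form_altdef sum_distrib_left)
  also have "(\<Sum>p\<in>UNIV. t$p * r$p$k) = (r *v t)$k"
    using sym by (simp add: matrix_vector_mult_def mult.commute)
  finally show ?thesis by (simp add: algebra_simps)
qed

lemma has_real_derivative_Snorm_line:
  fixes r :: "real^'n^'n"
  assumes sym: "\<forall>p q. r$p$q = r$q$p" and pos: "quad_form r t > 0"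
  shows "((\<lambda>y. Snorm r (t + y *\<^sub>R axis k 1)) has_real_derivative Lcov r t k) (at 0)"
proof -
  define Q where "Q = quad_form r t"
  have Q0: "Q > 0" using pos by (simp only: Q_def)
  have "((\<lambda>y. Q + y * (2 * (r *v t)$k) + y^2 * r$k$k) has_real_derivative 2 * (r *v t)$k) (at 0)"
    by (auto intro!: derivative_eq_intros)
  from DERIV_chain2[OF DERIV_real_sqrt this] Q0
  have "((\<lambda>y. sqrt (Q + y * (2 * (r *v t)$k) + y^2 * r$k$k)) has_real_derivative
      inverse (sqrt Q) / 2 * (2 * (r *v t)$k)) (at 0)"
    by simp
  moreover have "inverse (sqrt Q) / 2 * (2 * (r *v t)$k) = Lcov r t k"
    unfolding Lcov_altdef Snorm_def Q_def[symmetric] using Q0 by (simp add: field_simps)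
  moreover have "(\<lambda>y. Snorm r (t + y *\<^sub>R axis k 1))
      = (\<lambda>y. sqrt (Q + y * (2 * (r *v t)$k) + y^2 * r$k$k))"
    unfolding Snorm_def quad_form_line[OF sym] Q_def ..
  ultimately show ?thesis by (simp only:)
qed

lemma has_real_derivative_Lcov_line:
  fixes r :: "real^'n^'n"
  assumes sym: "\<forall>p q. r$p$q = r$q$p" and pos: "quad_form r t > 0"
  shows "((\<lambda>y. Lcov r (t + y *\<^sub>R axis k 1) m) has_real_derivative
           (r$m$k - Lcov r t m * Lcov r t k) / Snorm r t) (at 0)"
proof -
  have "((\<lambda>y. (r *v t)$m + y * r$m$k) has_real_derivative r$m$k) (at 0)"
    by (auto intro!: derivative_eq_intros)
  from DERIV_divide[OF this has_real_derivative_Snorm_line[OF sym pos]] Snorm_pos[OF pos]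
  have "((\<lambda>y. ((r *v t)$m + y * r$m$k) / Snorm r (t + y *\<^sub>R axis k 1)) has_real_derivative
      (r$m$k * Snorm r t - (r *v t)$m * Lcov r t k) / (Snorm r t * Snorm r t)) (at 0)"
    by simp
  moreover have "(r$m$k * Snorm r t - (r *v t)$m * Lcov r t k) / (Snorm r t * Snorm r t)
      = (r$m$k - Lcov r t m * Lcov r t k) / Snorm r t"
    using Snorm_pos[OF pos] by (simp add: Lcov_altdef field_simps)
  ultimately show ?thesis
    unfolding Lcov_altdef[of r "t + _"] matrix_vector_mult_line by simp
qed

lemma partial_qe_metric:
  fixes r :: "real^'n^'n"
  assumes sym: "\<forall>p q. r$p$q = r$q$p" and pos: "quad_form r t > 0"
  shows "partial (\<lambda>x. qe_metric g r x m s) k t = - ((Gpar g)^2 / 4) *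
    (r$m$k * Lcov r t s + r$s$k * Lcov r t m - 2 * Lcov r t m * Lcov r t s * Lcov r t k) / Snorm r t"
proof -
  have "((\<lambda>y. qe_metric g r (t + y *\<^sub>R axis k 1) m s) has_real_derivative
      - (1/4) * (Gpar g)^2 * ((r$m$k - Lcov r t m * Lcov r t k) / Snorm r t * Lcov r t s
        + Lcov r t m * ((r$s$k - Lcov r t s * Lcov r t k) / Snorm r t))) (at 0)"
    unfolding qe_metric_def using Snorm_pos[OF pos]
    by (auto intro!: derivative_eq_intros has_real_derivative_Lcov_line[OF sym pos] simp: field_simps)
  then have "partial (\<lambda>x. qe_metric g r x m s) k t
      = - (1/4) * (Gpar g)^2 * ((r$m$k - Lcov r t m * Lcov r t k) / Snorm r t * Lcov r t s
        + Lcov r t m * ((r$s$k - Lcov r t s * Lcov r t k) / Snorm r t))"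
    unfolding partial_def by (rule DERIV_imp_deriv)
  also have "\<dots> = - ((Gpar g)^2 / 4) *
    (r$m$k * Lcov r t s + r$s$k * Lcov r t m - 2 * Lcov r t m * Lcov r t s * Lcov r t k) / Snorm r t"
    using Snorm_pos[OF pos] by (simp add: field_simps)
  finally show ?thesis .
qed

lemma christoffel_combination:
  fixes r :: "real^'n^'n"
  assumes sym: "\<forall>p q. r$p$q = r$q$p" and pos: "quad_form r t > 0"
  shows "partial (\<lambda>x. qe_metric g r x j m) q t + partial (\<lambda>x. qe_metric g r x j q) m t
      - partial (\<lambda>x. qe_metric g r x q m) j t
    = - ((Gpar g)^2 / 2) * (r$q$m - Lcov r t q * Lcov r t m) / Snorm r t * Lcov r t j"
  using sym Snorm_pos[OF pos] by (simp add: partial_qe_metric[OF sym pos] field_simps)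

section \<open>Christoffel symbols and geodesics\<close>

lemma hpar_sq:
  assumes "-2 < g" "g < 2"
  shows "g^2 < 4" and "(hpar g)^2 = 1 - g^2 / 4"
proof -
  have "0 < (2 - g) * (2 + g)"
    using assms by (intro mult_pos_pos) auto
  then show "g^2 < 4"
    by (simp add: algebra_simps power2_eq_square)
  then show "(hpar g)^2 = 1 - g^2 / 4"
    by (simp add: hpar_def)
qed

lemma hpar_pos: "-2 < g \<Longrightarrow> g < 2 \<Longrightarrow> hpar g > 0"
  using hpar_sq(1) by (simp add: hpar_def)

lemma hpar_Gpar_identity: "-2 < g \<Longrightarrow> g < 2 \<Longrightarrow> 1 / (hpar g)^2 - (Gpar g)^2 / 4 = 1"
  using hpar_sq[of g] hpar_pos[of g] by (simp add: Gpar_def power_divide field_simps)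

lemma qe_metric_matrix_mult:
  "(qe_metric_matrix g r t *v u)$p
    = (r *v u)$p / (hpar g)^2 - (Gpar g)^2 / 4 * Lcov r t p * (\<Sum>q\<in>UNIV. Lcov r t q * u$q)"
  by (simp add: qe_metric_matrix_def qe_metric_def matrix_vector_mult_def sum_subtractf
      sum_distrib_left sum_divide_distrib algebra_simps)

lemma qe_metric_matrix_mult_self:
  fixes r :: "real^'n^'n"
  assumes pos: "quad_form r t > 0" and g: "-2 < g" "g < 2"
  shows "qe_metric_matrix g r t *v t = r *v t"
proof -
  have "(qe_metric_matrix g r t *v t)$p = (r *v t)$p * (1 / (hpar g)^2 - (Gpar g)^2 / 4)" for p
    using Snorm_pos[OF pos]
    unfolding qe_metric_matrix_mult sum_Lcov_mult_self[OF pos] Lcov_altdef[of r t p]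
    by (simp add: field_simps)
  then show ?thesis
    by (simp add: vec_eq_iff hpar_Gpar_identity[OF g])
qed

lemma qe_metric_matrix_kernel:
  fixes r :: "real^'n^'n"
  assumes sym: "\<forall>p q. r$p$q = r$q$p"
    and pd: "\<forall>x::real^'n. x \<noteq> 0 \<longrightarrow> quad_form r x > 0"
    and pos: "quad_form r t > 0" and g: "-2 < g" "g < 2"
    and ker: "qe_metric_matrix g r t *v u = 0"
  shows "u = 0"
proof -
  define Lu where "Lu = (\<Sum>q\<in>UNIV. Lcov r t q * u$q)"
  define c where "c = (hpar g)^2 * ((Gpar g)^2 / 4)"
  have ru: "(r *v u)$p = c * Lcov r t p * Lu" for p
    using arg_cong[OF ker, of "\<lambda>v. v$p"] hpar_pos[OF g]
    unfolding qe_metric_matrix_mult Lu_def[symmetric] c_def by (simp add: field_simps)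
  have "(\<Sum>p\<in>UNIV. t$p * (r *v u)$p) = (\<Sum>q\<in>UNIV. (r *v t)$q * u$q)"
    by (simp add: matrix_vector_mult_def sum_distrib_left sum_distrib_right,
        subst sum.swap, simp add: sym mult_ac)
  also have "\<dots> = Snorm r t * Lu"
    using Snorm_pos[OF pos] by (simp add: Lu_def Lcov_altdef sum_distrib_left)
  finally have "Snorm r t * Lu = c * Lu * Snorm r t"
    unfolding ru sum_Lcov_mult_self[OF pos, symmetric]
    by (simp add: sum_distrib_left mult_ac)
  moreover have "1 - c = (hpar g)^2"
    using hpar_Gpar_identity[OF g] hpar_pos[OF g] by (simp add: c_def field_simps)
  ultimately have "Lu = 0"
    using hpar_pos[OF g] Snorm_pos[OF pos] by (auto simp: algebra_simps)
  then have "quad_form r u = 0"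
    by (simp add: quad_form_altdef ru)
  then show "u = 0"
    using pd by force
qed

lemma matrix_inv_mult_left:
  fixes A :: "'a::semiring_1^'n^'m"
  assumes "invertible A"
  shows "matrix_inv A ** A = mat 1"
  using someI_ex[OF assms[unfolded invertible_def]] by (simp add: matrix_inv_def)

lemma qe_metric_matrix_inv_mult:
  fixes r :: "real^'n^'n"
  assumes sym: "\<forall>p q. r$p$q = r$q$p"
    and pd: "\<forall>x::real^'n. x \<noteq> 0 \<longrightarrow> quad_form r x > 0"
    and pos: "quad_form r t > 0" and g: "-2 < g" "g < 2"
  shows "matrix_inv (qe_metric_matrix g r t) *v (r *v t) = t"
proof -
  let ?N = "qe_metric_matrix g r t"
  have "invertible ?N"
    using qe_metric_matrix_kernel[OF sym pd pos g] matrix_left_invertible_ker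
    by (metis invertible_left_inverse)
  then have "matrix_inv ?N ** ?N = mat 1"
    by (rule matrix_inv_mult_left)
  then show ?thesis
    by (metis qe_metric_matrix_mult_self[OF pos g] matrix_vector_mul_assoc matrix_vector_mul_lid)
qed

lemma qe_inv_metric_Lcov:
  fixes r :: "real^'n^'n"
  assumes sym: "\<forall>p q. r$p$q = r$q$p"
    and pd: "\<forall>x::real^'n. x \<noteq> 0 \<longrightarrow> quad_form r x > 0"
    and pos: "quad_form r t > 0" and g: "-2 < g" "g < 2"
  shows "(\<Sum>j\<in>UNIV. qe_inv_metric g r t p j * Lcov r t j) = t$p / Snorm r t"
proof -
  have "(\<Sum>j\<in>UNIV. qe_inv_metric g r t p j * (r *v t)$j) = t$p"
    using arg_cong[OF qe_metric_matrix_inv_mult[OF sym pd pos g], of "\<lambda>v. v$p"]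
    by (simp add: qe_inv_metric_def matrix_vector_mult_def)
  then show ?thesis
    by (simp add: Lcov_altdef flip: sum_divide_distrib)
qed

lemma christoffel_eq:
  fixes r :: "real^'n^'n"
  assumes sym: "\<forall>p q. r$p$q = r$q$p"
    and pd: "\<forall>x::real^'n. x \<noteq> 0 \<longrightarrow> quad_form r x > 0"
    and pos: "quad_form r t > 0" and g: "-2 < g" "g < 2"
  shows "christoffel g r t q p m
    = - ((Gpar g)^2 / 4) * (r$q$m - Lcov r t q * Lcov r t m) / (Snorm r t)^2 * t$p"
proof -
  define \<kappa> where "\<kappa> = - ((Gpar g)^2 / 2) * (r$q$m - Lcov r t q * Lcov r t m) / Snorm r t"
  have "christoffel g r t q p m = (1/2) * (\<Sum>j\<in>UNIV. qe_inv_metric g r t p j * (\<kappa> * Lcov r t j))"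
    unfolding christoffel_def christoffel_combination[OF sym pos] \<kappa>_def by (simp add: mult_ac)
  also have "\<dots> = (1/2) * \<kappa> * (t$p / Snorm r t)"
    by (simp add: qe_inv_metric_Lcov[OF sym pd pos g, symmetric] sum_distrib_left mult_ac)
  finally show ?thesis
    by (simp add: \<kappa>_def power2_eq_square)
qed

lemma qe_geodesic_radial_acceleration:
  fixes r :: "real^'n^'n"
  assumes sym: "\<forall>p q. r$p$q = r$q$p"
    and pd: "\<forall>x::real^'n. x \<noteq> 0 \<longrightarrow> quad_form r x > 0"
    and g: "-2 < g" "g < 2"
    and "qe_geodesic g r c a b"
  obtains c' \<mu> where "\<And>s. s \<in> {a<..<b} \<Longrightarrow> c s \<noteq> 0"
    and "\<And>s. s \<in> {a<..<b} \<Longrightarrow> (c has_vector_derivative c' s) (at s)"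
    and "\<And>s. s \<in> {a<..<b} \<Longrightarrow> (c' has_vector_derivative \<mu> s *\<^sub>R c s) (at s)"
proof -
  obtain c' c'' where geo: "\<forall>s\<in>{a<..<b}. c s \<noteq> 0 \<and>
        (c has_vector_derivative c' s) (at s) \<and>
        (c' has_vector_derivative c'' s) (at s) \<and>
        (\<forall>p. c'' s $ p + (\<Sum>q\<in>UNIV. \<Sum>m\<in>UNIV.
                 christoffel g r (c s) q p m * c' s $ q * c' s $ m) = 0)"
    using assms(5) unfolding qe_geodesic_def by blast
  define K where "K t q m = - ((Gpar g)^2 / 4) * (r$q$m - Lcov r t q * Lcov r t m) / (Snorm r t)^2"
    for t q m
  define \<mu> where "\<mu> s = - (\<Sum>q\<in>UNIV. \<Sum>m\<in>UNIV. K (c s) q m * c' s $ q * c' s $ m)" for s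
  have "c'' s = \<mu> s *\<^sub>R c s" if s: "s \<in> {a<..<b}" for s
  proof -
    note geo_s = bspec[OF geo s]
    have pos: "quad_form r (c s) > 0"
      using pd geo_s by simp
    have "c'' s $ p = \<mu> s * c s $ p" for p
    proof -
      have "(\<Sum>q\<in>UNIV. \<Sum>m\<in>UNIV. christoffel g r (c s) q p m * c' s $ q * c' s $ m)
          = c s $ p * (\<Sum>q\<in>UNIV. \<Sum>m\<in>UNIV. K (c s) q m * c' s $ q * c' s $ m)"
        unfolding christoffel_eq[OF sym pd pos g] K_def[symmetric]
        by (simp add: sum_distrib_left mult_ac)
      moreover have "c'' s $ p + (\<Sum>q\<in>UNIV. \<Sum>m\<in>UNIV.
                 christoffel g r (c s) q p m * c' s $ q * c' s $ m) = 0"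
        using geo_s by blast
      ultimately show ?thesis
        unfolding \<mu>_def by (simp add: algebra_simps)
    qed
    then show ?thesis
      by (simp add: vec_eq_iff)
  qed
  with geo show thesis
    by (intro that[of c' \<mu>]) auto
qed

theorem proposition3p2:
  fixes r :: "real^'n^'n" and nN :: 'n and g a b :: real
    and c :: "real \<Rightarrow> real^'n"
  assumes "CARD('n) \<ge> 2"
    and "\<forall>p q. r$p$q = r$q$p"
    and "\<forall>x::real^'n. x \<noteq> 0 \<longrightarrow> (\<Sum>p\<in>UNIV. \<Sum>q\<in>UNIV. r$p$q * x$p * x$q) > 0"
    and "r$nN$nN = 1"
    and "\<forall>a. a \<noteq> nN \<longrightarrow> r$nN$a = 0"
    and "-2 < g" and "g < 2"
    and "a < b"
    and "qe_geodesic g r c a b"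
  shows "\<exists>V :: (real^'n) set. subspace V \<and> dim V = 2 \<and> (\<forall>s\<in>{a<..<b}. c s \<in> V)"
proof -
  obtain c' \<mu> where nz: "\<And>s. s \<in> {a<..<b} \<Longrightarrow> c s \<noteq> 0"
    and c': "\<And>s. s \<in> {a<..<b} \<Longrightarrow> (c has_vector_derivative c' s) (at s)"
    and c'': "\<And>s. s \<in> {a<..<b} \<Longrightarrow> (c' has_vector_derivative \<mu> s *\<^sub>R c s) (at s)"
    using qe_geodesic_radial_acceleration[OF assms(2,3,6,7,9)] by blast
  define s0 where "s0 = (a + b) / 2"
  have s0: "s0 \<in> {a<..<b}"
    using \<open>a < b\<close> by (simp add: s0_def)
  obtain V where V: "subspace V" "dim V = 2" "c s0 \<in> V" "c' s0 \<in> V"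
    using plane_through_two_vectors[of "c s0" "c' s0"] assms(1) by auto
  have "c s \<in> V" if "s \<in> {a<..<b}" for s
    by (rule radial_acceleration_stays_in_subspace[OF _ V(1) nz c' c'' s0 V(3,4) that]) simp
  then show ?thesis
    using V by blast
qed

end
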